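(* Let $\mathcal{A}$ be a finite-domain structure with domain $A$ of size $n$ on an infinite relational signature $\sigma$. For each $m$ (and each set $\Omega_m$ of adversaries of length $m$ for which the sentences below are well defined), $\mathcal{A}\models\phi_{n,\Omega_m,\mathcal{A}}$ if and only if for every finite subset $\sigma'\subset\sigma$, $\mathcal{A}^{\sigma'}\models\phi^{\sigma'}_{n,\Omega_m,\mathcal{A}}$.
   Context: For $\sigma'\subseteq\sigma$, $\mathcal{A}^{\sigma'}$ is the $\sigma'$-reduct of $\mathcal{A}$. An adversary of length $m$ is a set $\mathscr{O}\subseteq A^m$ of $m$-tuples; $\Omega_m$ is a set of such adversaries. A map $\mu:[n]\times[m]\to A$ is consistent with $\mathscr{O}$ if for every $(i_1,\ldots,i_m)\in[n]^m$ the tuple $(\mu(i_1,1),\ldots,\mu(i_m,m))$ lies in $\mathscr{O}$; $A^{[n.m]}_{\restriction\mathscr{O}}$ is the set of such maps. Let $\sigma^{(n.m)}$ be $\sigma$ expanded by constants $c_{i,j}$, $i\in[n]$, $j\in[m]$, and let $\mathfrak{A}_{\mathscr{O},\mu}$ be the expansion of $\mathcal{A}$ interpreting $c_{i,j}$ as $\mu(i,j)$. Form the direct product structure $P=\bigotimes_{\mathscr{O}\in\Omega_m}\bigotimes_{\mu\in A^{[n.m]}_{\restriction\mathscr{O}}}\mathfrak{A}_{\mathscr{O},\mu}$ (domain the product of copies of $A$, relations and constants interpreted coordinatewise). It is assumed that the $n.m$ constants are interpreted by pairwise distinct elements of $P$ (otherwise the sentence is not defined). The canonical query of the $\sigma$-reduct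 of $P$ is the conjunction, with one variable per element of $P$, of all atoms $R(x_{p_1},\ldots,x_{p_r})$ with $R\in\sigma$ and $(p_1,\ldots,p_r)\in R^P$. $\phi_{n,\Omega_m,\mathcal{A}}$ is the (possibly infinite) sentence obtained from this canonical query by renaming the variable of the element interpreting $c_{i,j}$ as $w_{i,j}$, universally quantifying all $w_{i,j}$ outermost and existentially quantifying all remaining variables. For finite $\sigma'\subset\sigma$, $\phi^{\sigma'}_{n,\Omega_m,\mathcal{A}}$ is the (finite) sentence obtained in the same way from the product $\bigotimes_{\mathscr{O}}\bigotimes_{\mu}\mathfrak{A}^{\sigma'}_{\mathscr{O},\mu}$ of the expansions of $\mathcal{A}^{\sigma'}$ by the constants, using only the relations of $\sigma'$. *)

theory Defs
  imports Main "HOL-Library.FuncSet"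
begin

text \<open>A relational structure: domain D, signature S, arity ar, interpretation I
  (relation symbol \<mapsto> set of tuples, tuples as lists).\<close>

definition wf_structure :: "'a set \<Rightarrow> 'r set \<Rightarrow> ('r \<Rightarrow> nat) \<Rightarrow> ('r \<Rightarrow> 'a list set) \<Rightarrow> bool" where
  "wf_structure D S ar I \<longleftrightarrow>
     (\<forall>R\<in>S. I R \<subseteq> {xs. length xs = ar R \<and> set xs \<subseteq> D})"

definition reduct :: "('r \<Rightarrow> 'a list set) \<Rightarrow> 'r set \<Rightarrow> ('r \<Rightarrow> 'a list set)" where
  "reduct I S' = (\<lambda>R. if R \<in> S' then I R else {})"

definition adversaries :: "'a set \<Rightarrow> nat \<Rightarrow> 'a list set set" where
  "adversaries D m = Pow {xs. length xs = m \<and> set xs \<subseteq> D}"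

definition consistent_maps :: "'a set \<Rightarrow> nat \<Rightarrow> nat \<Rightarrow> 'a list set \<Rightarrow> (nat \<times> nat \<Rightarrow> 'a) set" where
  "consistent_maps D n m Ob =
     {\<mu> \<in> ({1..n} \<times> {1..m}) \<rightarrow>\<^sub>E D.
        \<forall>idx. length idx = m \<longrightarrow> set idx \<subseteq> {1..n} \<longrightarrow>
              map (\<lambda>j. \<mu> (idx ! (j - 1), j)) [1..<m+1] \<in> Ob}"

definition prod_index :: "'a set \<Rightarrow> nat \<Rightarrow> nat \<Rightarrow> 'a list set set \<Rightarrow> ('a list set \<times> (nat \<times> nat \<Rightarrow> 'a)) set" where
  "prod_index D n m \<Omega> = {(Ob, \<mu>). Ob \<in> \<Omega> \<and> \<mu> \<in> consistent_maps D n m Ob}"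

definition prod_dom :: "'a set \<Rightarrow> nat \<Rightarrow> nat \<Rightarrow> 'a list set set \<Rightarrow> (('a list set \<times> (nat \<times> nat \<Rightarrow> 'a)) \<Rightarrow> 'a) set" where
  "prod_dom D n m \<Omega> = prod_index D n m \<Omega> \<rightarrow>\<^sub>E D"

definition prod_rel :: "'a set \<Rightarrow> nat \<Rightarrow> nat \<Rightarrow> 'a list set set \<Rightarrow> ('r \<Rightarrow> nat) \<Rightarrow> ('r \<Rightarrow> 'a list set)
    \<Rightarrow> 'r \<Rightarrow> (('a list set \<times> (nat \<times> nat \<Rightarrow> 'a)) \<Rightarrow> 'a) list set" where
  "prod_rel D n m \<Omega> ar I R =
     {ps. length ps = ar R \<and> set ps \<subseteq> prod_dom D n m \<Omega> \<and>
          (\<forall>k \<in> prod_index D n m \<Omega>. map (\<lambda>p. p k) ps \<in> I R)}"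

definition prod_const :: "'a set \<Rightarrow> nat \<Rightarrow> nat \<Rightarrow> 'a list set set \<Rightarrow> nat \<times> nat
    \<Rightarrow> (('a list set \<times> (nat \<times> nat \<Rightarrow> 'a)) \<Rightarrow> 'a)" where
  "prod_const D n m \<Omega> ij = restrict (\<lambda>(Ob, \<mu>). \<mu> ij) (prod_index D n m \<Omega>)"

text \<open>Well-definedness: the n.m constants are interpreted by pairwise distinct elements.\<close>
definition consts_distinct :: "'a set \<Rightarrow> nat \<Rightarrow> nat \<Rightarrow> 'a list set set \<Rightarrow> bool" where
  "consts_distinct D n m \<Omega> \<longleftrightarrow> inj_on (prod_const D n m \<Omega>) ({1..n} \<times> {1..m})"

datatype 'e var = W nat nat | X 'e

text \<open>Sentences of shape  forall univ. exists ex. conjunction of atoms  (possibly infinite conjunction).\<close>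
record ('r, 'v) ae_sentence =
  atoms :: "('r \<times> 'v list) set"
  univ_vars :: "'v set"
  ex_vars :: "'v set"

definition sat :: "'a set \<Rightarrow> ('r \<Rightarrow> 'a list set) \<Rightarrow> ('r, 'v) ae_sentence \<Rightarrow> bool" where
  "sat D I \<phi> \<longleftrightarrow>
     (\<forall>g. (\<forall>v\<in>univ_vars \<phi>. g v \<in> D) \<longrightarrow>
        (\<exists>h. (\<forall>v\<in>ex_vars \<phi>. h v \<in> D) \<and>
             (\<forall>(R, vs) \<in> atoms \<phi>. map (\<lambda>v. if v \<in> univ_vars \<phi> then g v else h v) vs \<in> I R)))"

text \<open>Variable naming: the element interpreting c_{i,j} gets the variable w_{i,j}.\<close>
definition var_of :: "'a set \<Rightarrow> nat \<Rightarrow> nat \<Rightarrow> 'a list set set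
    \<Rightarrow> (('a list set \<times> (nat \<times> nat \<Rightarrow> 'a)) \<Rightarrow> 'a) \<Rightarrow> (('a list set \<times> (nat \<times> nat \<Rightarrow> 'a)) \<Rightarrow> 'a) var" where
  "var_of D n m \<Omega> p =
     (if \<exists>ij \<in> {1..n} \<times> {1..m}. prod_const D n m \<Omega> ij = p
      then (let (i, j) = (THE ij. ij \<in> {1..n} \<times> {1..m} \<and> prod_const D n m \<Omega> ij = p) in W i j)
      else X p)"

text \<open>phi_{n,Omega_m,A} built over the relation symbols S (S = sigma gives the full sentence,
  S = sigma' finite gives phi^{sigma'}).\<close>
definition phi :: "'a set \<Rightarrow> nat \<Rightarrow> nat \<Rightarrow> 'a list set set \<Rightarrow> ('r \<Rightarrow> nat) \<Rightarrow> ('r \<Rightarrow> 'a list set) \<Rightarrow> 'r set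
    \<Rightarrow> ('r, (('a list set \<times> (nat \<times> nat \<Rightarrow> 'a)) \<Rightarrow> 'a) var) ae_sentence" where
  "phi D n m \<Omega> ar I S =
     \<lparr> atoms = {(R, map (var_of D n m \<Omega>) ps) | R ps. R \<in> S \<and> ps \<in> prod_rel D n m \<Omega> ar I R},
       univ_vars = {W i j | i j. i \<in> {1..n} \<and> j \<in> {1..m}},
       ex_vars = {X p | p. p \<in> prod_dom D n m \<Omega> \<and> p \<notin> prod_const D n m \<Omega> ` ({1..n} \<times> {1..m})} \<rparr>"

end

theory Submission
  imports Defs
begin

text \<open>Only finitely many assignments to the existential variables of \<open>\<phi>\<close> exist, since
  the domain \<open>A\<close> and the product \<open>P\<close> are finite. If \<open>\<phi>\<close> failed under some assignment of the
  universal variables, each of these finitely many candidate witnesses would falsify some atom;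
  the finitely many relation symbols of these atoms form a finite \<open>\<sigma>'\<close> for which
  \<open>\<phi>\<^sup>\<sigma>'\<close> already fails.\<close>

definition sentence_reduct :: "'r set \<Rightarrow> ('r, 'v) ae_sentence \<Rightarrow> ('r, 'v) ae_sentence" where
  "sentence_reduct S \<phi> = \<phi>\<lparr>atoms := {(R, vs) \<in> atoms \<phi>. R \<in> S}\<rparr>"

lemma sat_sentence_reduct: "sat D I \<phi> \<Longrightarrow> sat D I (sentence_reduct S \<phi>)"
  unfolding sat_def sentence_reduct_def by fastforce

lemma sat_reduct_sentence_reduct:
  "sat D (reduct I S) (sentence_reduct S \<phi>) \<longleftrightarrow> sat D I (sentence_reduct S \<phi>)"
  unfolding sat_def sentence_reduct_def reduct_def by (auto simp: case_prod_beta)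

lemma sat_if_sat_finite_sentence_reducts:
  assumes "finite D" and "finite (ex_vars \<phi>)"
    and closed: "\<And>R vs. (R, vs) \<in> atoms \<phi> \<Longrightarrow> set vs \<subseteq> univ_vars \<phi> \<union> ex_vars \<phi>"
    and reducts: "\<And>S. finite S \<Longrightarrow> S \<subseteq> fst ` atoms \<phi> \<Longrightarrow> sat D I (sentence_reduct S \<phi>)"
  shows "sat D I \<phi>"
  unfolding sat_def
proof (intro allI impI, rule ccontr)
  let ?U = "univ_vars \<phi>" and ?E = "ex_vars \<phi>"
  fix g assume g: "\<forall>v\<in>?U. g v \<in> D"
  let ?val = "\<lambda>h. map (\<lambda>v. if v \<in> ?U then g v else h v)"
  assume "\<not> (\<exists>h. (\<forall>v\<in>?E. h v \<in> D) \<and> (\<forall>(R, vs)\<in>atoms \<phi>. ?val h vs \<in> I R))"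
  then have "\<forall>h\<in>?E \<rightarrow>\<^sub>E D. \<exists>a\<in>atoms \<phi>. ?val h (snd a) \<notin> I (fst a)"
    by fastforce
  then obtain F where F: "\<And>h. h \<in> ?E \<rightarrow>\<^sub>E D \<Longrightarrow> F h \<in> atoms \<phi> \<and> ?val h (snd (F h)) \<notin> I (fst (F h))"
    by metis
  define S where "S = fst ` F ` (?E \<rightarrow>\<^sub>E D)"
  have "finite S"
    unfolding S_def using assms(1,2) by (simp add: finite_PiE)
  moreover have "S \<subseteq> fst ` atoms \<phi>"
    unfolding S_def using F by blast
  ultimately have "sat D I (sentence_reduct S \<phi>)"
    by (rule reducts)
  then obtain h' where h': "\<forall>v\<in>?E. h' v \<in> D"
    and sat_S: "\<forall>(R, vs) \<in> atoms \<phi>. R \<in> S \<longrightarrow> ?val h' vs \<in> I R"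
    using g unfolding sat_def sentence_reduct_def by fastforce
  define h where "h = restrict h' ?E"
  have h: "h \<in> ?E \<rightarrow>\<^sub>E D"
    using h' by (simp add: h_def)
  obtain R vs where Fh: "F h = (R, vs)" by fastforce
  with F[OF h] have atom: "(R, vs) \<in> atoms \<phi>" and falsified: "?val h vs \<notin> I R"
    by auto
  have "R \<in> S"
    unfolding S_def using h Fh by (metis fst_conv image_eqI)
  with sat_S atom have "?val h' vs \<in> I R"
    by blast
  moreover have "?val h' vs = ?val h vs"
    using closed[OF atom] by (auto simp: h_def)
  ultimately show False
    using falsified by simp
qed

lemma fst_atoms_phi_subset: "fst ` atoms (phi D n m \<Omega> ar I S) \<subseteq> S"
  unfolding phi_def by force

lemma phi_reduct:
  assumes "S' \<subseteq> S"
  shows "phi D n m \<Omega> ar (reduct I S') S' = sentence_reduct S' (phi D n m \<Omega> ar I S)"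
proof -
  have "\<And>R. R \<in> S' \<Longrightarrow> prod_rel D n m \<Omega> ar (reduct I S') R = prod_rel D n m \<Omega> ar I R"
    by (simp add: prod_rel_def reduct_def)
  then show ?thesis
    using assms unfolding phi_def sentence_reduct_def by auto
qed

lemma finite_prod_dom:
  assumes "finite D" and "\<Omega> \<subseteq> adversaries D m"
  shows "finite (prod_dom D n m \<Omega>)"
proof -
  have "finite (adversaries D m)"
    using finite_lists_length_eq[OF assms(1), of m] by (simp add: adversaries_def conj_commute)
  then have "finite \<Omega>"
    using assms(2) by (rule finite_subset[rotated])
  moreover have "prod_index D n m \<Omega> \<subseteq> \<Omega> \<times> (({1..n} \<times> {1..m}) \<rightarrow>\<^sub>E D)"
    unfolding prod_index_def consistent_maps_def by auto
  ultimately have "finite (prod_index D n m \<Omega>)"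
    using assms(1) by (auto intro: finite_subset simp: finite_PiE)
  then show ?thesis
    unfolding prod_dom_def using assms(1) by (simp add: finite_PiE)
qed

lemma finite_ex_vars_phi:
  assumes "finite D" and "\<Omega> \<subseteq> adversaries D m"
  shows "finite (ex_vars (phi D n m \<Omega> ar I S))"
proof -
  have "ex_vars (phi D n m \<Omega> ar I S) \<subseteq> X ` prod_dom D n m \<Omega>"
    by (auto simp: phi_def)
  then show ?thesis
    using finite_prod_dom[OF assms] finite_subset by blast
qed

lemma var_of_mem_vars:
  assumes "consts_distinct D n m \<Omega>" and "p \<in> prod_dom D n m \<Omega>"
  shows "var_of D n m \<Omega> p \<in> univ_vars (phi D n m \<Omega> ar I S) \<union> ex_vars (phi D n m \<Omega> ar I S)"
proof (cases "\<exists>ij \<in> {1..n} \<times> {1..m}. prod_const D n m \<Omega> ij = p")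
  case True
  then have "\<exists>!ij. ij \<in> {1..n} \<times> {1..m} \<and> prod_const D n m \<Omega> ij = p"
    using assms(1) unfolding consts_distinct_def inj_on_def by blast
  then have "(THE ij. ij \<in> {1..n} \<times> {1..m} \<and> prod_const D n m \<Omega> ij = p) \<in> {1..n} \<times> {1..m}"
    by (rule theI'[THEN conjunct1])
  with True show ?thesis
    by (auto simp: var_of_def phi_def split: prod.split)
next
  case False
  with assms(2) show ?thesis
    by (auto simp: var_of_def phi_def)
qed

lemma phi_closed:
  assumes "consts_distinct D n m \<Omega>" and "(R, vs) \<in> atoms (phi D n m \<Omega> ar I S)"
  shows "set vs \<subseteq> univ_vars (phi D n m \<Omega> ar I S) \<union> ex_vars (phi D n m \<Omega> ar I S)"
proof -
  from assms(2) obtain ps where "ps \<in> prod_rel D n m \<Omega> ar I R" and "vs = map (var_of D n m \<Omega>) ps"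
    by (auto simp: phi_def)
  then show ?thesis
    using var_of_mem_vars[OF assms(1), of _ ar I S] by (auto simp: prod_rel_def)
qed

theorem lemma1:
  fixes A :: "'a set" and \<sigma> :: "'r set" and ar :: "'r \<Rightarrow> nat" and I :: "'r \<Rightarrow> 'a list set"
    and n m :: nat and \<Omega> :: "'a list set set"
  assumes "finite A" and "card A = n"
    and "infinite \<sigma>"
    and "wf_structure A \<sigma> ar I"
    and "\<Omega> \<subseteq> adversaries A m"
    and "consts_distinct A n m \<Omega>"
  shows "sat A I (phi A n m \<Omega> ar I \<sigma>) \<longleftrightarrow>
         (\<forall>\<sigma>'. finite \<sigma>' \<and> \<sigma>' \<subseteq> \<sigma> \<longrightarrow>
                 sat A (reduct I \<sigma>') (phi A n m \<Omega> ar (reduct I \<sigma>') \<sigma>'))"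
proof -
  let ?\<phi> = "phi A n m \<Omega> ar I \<sigma>"
  have reduct_iff: "sat A (reduct I \<sigma>') (phi A n m \<Omega> ar (reduct I \<sigma>') \<sigma>') \<longleftrightarrow>
      sat A I (sentence_reduct \<sigma>' ?\<phi>)" if "\<sigma>' \<subseteq> \<sigma>" for \<sigma>'
    unfolding phi_reduct[OF that] by (rule sat_reduct_sentence_reduct)
  have "sat A I ?\<phi>" if "\<forall>\<sigma>'. finite \<sigma>' \<and> \<sigma>' \<subseteq> \<sigma> \<longrightarrow> sat A I (sentence_reduct \<sigma>' ?\<phi>)"
  proof (rule sat_if_sat_finite_sentence_reducts)
    show "finite (ex_vars ?\<phi>)"
      using assms(1,5) by (rule finite_ex_vars_phi)
    show "set vs \<subseteq> univ_vars ?\<phi> \<union> ex_vars ?\<phi>" if "(R, vs) \<in> atoms ?\<phi>" for R vs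
      using assms(6) that by (rule phi_closed)
    show "sat A I (sentence_reduct S ?\<phi>)" if "finite S" and "S \<subseteq> fst ` atoms ?\<phi>" for S
    proof -
      have "S \<subseteq> \<sigma>"
        using that(2) fst_atoms_phi_subset by (rule order_trans)
      with that(1) \<open>\<forall>\<sigma>'. _\<close> show ?thesis
        by simp
    qed
  qed (use assms(1) in simp)
  then show ?thesis
    using reduct_iff sat_sentence_reduct by blast
qed

end
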